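(* Let $p$ be an odd prime and let $X$ be a finite family of $4p-3$ lattice points in $\mathbb{Z}^2$ (repetitions allowed). If $(p,X)=0$, then $(p-1,X)\equiv(3p-1,X) \pmod p$.
   Context: For a finite family $X$ of lattice points in $\mathbb{Z}^2$ (points may repeat; subsets are subfamilies, i.e. subsets of the index set) and an integer $n\ge 0$, $(n,X)$ denotes the number of $n$-element subfamilies of $X$ whose coordinatewise sum is congruent to $(0,0)$ modulo $p$. *)

theory Defs
  imports "HOL-Number_Theory.Cong" "HOL-Computational_Algebra.Primes"
begin

text \<open>A finite family of lattice points is given by an index set I and a map
  X from indices to points in Z^2. (n, X) counts the n-element subsets of the
  index set whose coordinatewise sum is congruent to (0,0) modulo p.\<close>

definition zero_sum_count :: "nat \<Rightarrow> nat \<Rightarrow> 'i set \<Rightarrow> ('i \<Rightarrow> int \<times> int) \<Rightarrow> nat" where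
  "zero_sum_count p n I X =
     card {S. S \<subseteq> I \<and> card S = n \<and>
              (\<Sum>i\<in>S. fst (X i)) mod int p = 0 \<and>
              (\<Sum>i\<in>S. snd (X i)) mod int p = 0}"

end

theory Submission
  imports Defs "HOL-Number_Theory.Number_Theory"
begin

text \<open>Write \<open>N\<^sub>n(T)\<close> for the number of zero-sum \<open>n\<close>-subsets of \<open>T\<close>. A Chevalley--Warning
  argument gives \<open>1 - N\<^sub>p(T) + N\<^sub>2\<^sub>p(T) \<equiv> 0 (mod p)\<close> whenever \<open>3p - 3 < |T| < 3p\<close>: the
  alternating sum over all subsets \<open>S \<subseteq> T\<close> of a polynomial of degree below \<open>|T|\<close> in the
  coordinate sums of \<open>S\<close> vanishes, and by Fermat the polynomial
  \<open>(1 - a\<^sup>p\<^sup>-\<^sup>1)(1 - b\<^sup>p\<^sup>-\<^sup>1)(1 - |S|\<^sup>p\<^sup>-\<^sup>1)\<close> is the indicator of zero-sum sets of size divisible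
  by \<open>p\<close>. Since \<open>I\<close> has no zero-sum \<open>p\<close>-subset, \<open>N\<^sub>2\<^sub>p(T) \<equiv> -1\<close> for all \<open>T \<subseteq> I\<close> of size
  \<open>3p - 2\<close> or \<open>3p - 1\<close>. Now count pairs \<open>A \<subseteq> T\<close> of zero-sum sets with \<open>|A| = p - 1\<close> and
  \<open>|T| = 3p - 1\<close>. For fixed \<open>T\<close>, \<open>T - A\<close> runs through the zero-sum \<open>2p\<close>-subsets of \<open>T\<close>;
  for fixed \<open>A\<close>, \<open>T - A\<close> runs through the zero-sum \<open>2p\<close>-subsets of \<open>I - A\<close>, which has
  \<open>3p - 2\<close> elements. Both counts are \<open>\<equiv> -1\<close>, hence \<open>N\<^sub>3\<^sub>p\<^sub>-\<^sub>1(I) \<equiv> N\<^sub>p\<^sub>-\<^sub>1(I)\<close>.\<close>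

lemma sum_Pow_supersets_alternating_eq_0:
  assumes "finite K" "U \<subset> K"
  shows "(\<Sum>S\<in>Pow K. if U \<subseteq> S then (-1::'a::ring_1) ^ card S else 0) = 0"
  using assms
  by (simp add: sum.inter_filter[symmetric] Pow_def sum_alternating_cancels card_subsupersets_even_odd)

lemma sum_Pow_alternating_prod_sums_eq_0:
  fixes c :: "nat \<Rightarrow> 'i \<Rightarrow> 'a::comm_ring_1"
  assumes K: "finite K" and d: "d < card K"
  shows "(\<Sum>S\<in>Pow K. (-1) ^ card S * (\<Prod>j<d. \<Sum>i\<in>S. c j i)) = 0"
proof -
  let ?F = "PiE {..<d} (\<lambda>_. K)"
  have expand: "(\<Prod>j<d. \<Sum>i\<in>S. c j i) = (\<Sum>f\<in>?F. if f ` {..<d} \<subseteq> S then \<Prod>j<d. c j (f j) else 0)"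
    if "S \<subseteq> K" for S
  proof -
    have "PiE {..<d} (\<lambda>_. S) = {f\<in>?F. f ` {..<d} \<subseteq> S}"
      using that by (auto simp: PiE_def Pi_def)
    then show ?thesis
      using K that by (simp add: prod_sum_PiE finite_subset sum.If_cases finite_PiE Int_def)
  qed
  have "(\<Sum>S\<in>Pow K. (-1) ^ card S * (\<Prod>j<d. \<Sum>i\<in>S. c j i))
      = (\<Sum>f\<in>?F. (\<Prod>j<d. c j (f j)) * (\<Sum>S\<in>Pow K. if f ` {..<d} \<subseteq> S then (-1) ^ card S else 0))"
    by (simp add: expand sum_distrib_left sum_distrib_right if_distrib mult.commute
        sum.swap[of _ "Pow K"] cong: if_cong)
  also have "\<dots> = 0"
  proof (intro sum.neutral ballI)
    fix f assume f: "f \<in> ?F"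
    have "card (f ` {..<d}) < card K"
      using card_image_le[of "{..<d}" f] d by simp
    then have "f ` {..<d} \<subset> K"
      using f by auto
    then show "(\<Prod>j<d. c j (f j)) * (\<Sum>S\<in>Pow K. if f ` {..<d} \<subseteq> S then (-1) ^ card S else 0) = 0"
      by (simp add: sum_Pow_supersets_alternating_eq_0[OF K])
  qed
  finally show ?thesis .
qed

lemma prod_lessThan_add:
  fixes f :: "nat \<Rightarrow> 'a::comm_monoid_mult"
  shows "(\<Prod>j<n + m. f j) = (\<Prod>j<n. f j) * (\<Prod>j<m. f (n + j))"
  by (induction m) (simp_all add: mult.assoc)

lemma sum_Pow_alternating_pow_sums_eq_0:
  fixes a b c :: "'i \<Rightarrow> 'a::comm_ring_1"
  assumes "finite K" "\<alpha> + \<beta> + \<gamma> < card K"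
  shows "(\<Sum>S\<in>Pow K. (-1) ^ card S *
           ((\<Sum>i\<in>S. a i) ^ \<alpha> * (\<Sum>i\<in>S. b i) ^ \<beta> * (\<Sum>i\<in>S. c i) ^ \<gamma>)) = 0"
proof -
  define e where "e j = (if j < \<alpha> then a else if j < \<alpha> + \<beta> then b else c)" for j
  have "(\<Sum>i\<in>S. a i) ^ \<alpha> * (\<Sum>i\<in>S. b i) ^ \<beta> * (\<Sum>i\<in>S. c i) ^ \<gamma>
      = (\<Prod>j<\<alpha> + \<beta> + \<gamma>. \<Sum>i\<in>S. e j i)" for S
    unfolding prod_lessThan_add by (simp add: e_def)
  then show ?thesis
    using sum_Pow_alternating_prod_sums_eq_0[OF assms(1), of "\<alpha> + \<beta> + \<gamma>" e] assms(2) by simp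
qed

lemma sum_Pow_alternating_chevalley_eq_0:
  fixes a b c :: "'i \<Rightarrow> 'a::comm_ring_1"
  assumes "finite K" "3 * q < card K"
  shows "(\<Sum>S\<in>Pow K. (-1) ^ card S *
           ((1 - (\<Sum>i\<in>S. a i) ^ q) * (1 - (\<Sum>i\<in>S. b i) ^ q) * (1 - (\<Sum>i\<in>S. c i) ^ q))) = 0"
proof -
  let ?m = "\<lambda>\<alpha> \<beta> \<gamma> S. (-1) ^ card S * ((\<Sum>i\<in>S. a i) ^ \<alpha> * (\<Sum>i\<in>S. b i) ^ \<beta> * (\<Sum>i\<in>S. c i) ^ \<gamma>)"
  have vanish: "(\<Sum>S\<in>Pow K. ?m \<alpha> \<beta> \<gamma> S) = 0" if "\<alpha> \<in> {0, q}" "\<beta> \<in> {0, q}" "\<gamma> \<in> {0, q}" for \<alpha> \<beta> \<gamma>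
    using that assms by (intro sum_Pow_alternating_pow_sums_eq_0) auto
  have "(-1) ^ card S * ((1 - (\<Sum>i\<in>S. a i) ^ q) * (1 - (\<Sum>i\<in>S. b i) ^ q) * (1 - (\<Sum>i\<in>S. c i) ^ q))
      = ?m 0 0 0 S - ?m q 0 0 S - ?m 0 q 0 S - ?m 0 0 q S
        + ?m q q 0 S + ?m q 0 q S + ?m 0 q q S - ?m q q q S" for S :: "'i set"
    by (simp add: algebra_simps)
  then show ?thesis
    using vanish[of 0 0 0] vanish[of q 0 0] vanish[of 0 q 0] vanish[of 0 0 q]
      vanish[of q q 0] vanish[of q 0 q] vanish[of 0 q q] vanish[of q q q]
    by (simp add: sum.distrib sum_subtractf)
qed

lemma fermat_theorem_int:
  fixes a :: int
  assumes "prime p" "\<not> int p dvd a"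
  shows "[a ^ (p - 1) = 1] (mod int p)"
proof -
  interpret residues_prime p "residue_ring (int p)"
    by unfold_locales (use assms in \<open>simp add: residue_ring_def\<close>)
  have "coprime a (int p)"
    using assms prime_imp_coprime[of "int p" a] by (simp add: coprime_commute)
  then show ?thesis
    using euler_theorem prime_totient_eq by simp
qed

lemma one_minus_pow_prime_minus_one_cong:
  fixes a :: int
  assumes "prime p"
  shows "[1 - a ^ (p - 1) = of_bool (int p dvd a)] (mod int p)"
proof (cases "int p dvd a")
  case True
  moreover have "p - 1 > 0"
    using prime_gt_1_nat[OF assms] by simp
  ultimately have "int p dvd a ^ (p - 1)"
    by (meson dvd_power dvd_trans)
  then show ?thesis
    using True by (simp add: cong_0_iff cong_diff[of 1 1 _ "a ^ (p - 1)" 0, simplified])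
next
  case False
  then show ?thesis
    using cong_diff[OF cong_refl fermat_theorem_int[OF assms False], of 1] by simp
qed

definition zero_sum :: "nat \<Rightarrow> ('i \<Rightarrow> int \<times> int) \<Rightarrow> 'i set \<Rightarrow> bool" where
  "zero_sum p X S \<longleftrightarrow> int p dvd (\<Sum>i\<in>S. fst (X i)) \<and> int p dvd (\<Sum>i\<in>S. snd (X i))"

definition zero_sum_subsets :: "nat \<Rightarrow> ('i \<Rightarrow> int \<times> int) \<Rightarrow> nat \<Rightarrow> 'i set \<Rightarrow> 'i set set" where
  "zero_sum_subsets p X n T = {S. S \<subseteq> T \<and> card S = n \<and> zero_sum p X S}"

lemma zero_sum_count_eq_card: "zero_sum_count p n T X = card (zero_sum_subsets p X n T)"
  by (simp add: zero_sum_count_def zero_sum_subsets_def zero_sum_def dvd_eq_mod_eq_0 conj_assoc)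

lemma finite_zero_sum_subsets: "finite T \<Longrightarrow> finite (zero_sum_subsets p X n T)"
  by (rule finite_subset[of _ "Pow T"]) (auto simp: zero_sum_subsets_def)

lemma zero_sum_subsets_mono: "T \<subseteq> I \<Longrightarrow> zero_sum_subsets p X n T \<subseteq> zero_sum_subsets p X n I"
  by (auto simp: zero_sum_subsets_def)

lemma zero_sum_Diff:
  assumes "finite T" "A \<subseteq> T" "zero_sum p X T" "zero_sum p X A"
  shows "zero_sum p X (T - A)"
  using assms by (simp add: zero_sum_def sum_diff finite_subset)

lemma zero_sum_Un:
  assumes "finite A" "finite B" "A \<inter> B = {}" "zero_sum p X A" "zero_sum p X B"
  shows "zero_sum p X (A \<union> B)"
  using assms by (simp add: zero_sum_def sum.union_disjoint)

lemma sum_alternating_zero_sum_subsets_card_dvd: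
  assumes "finite K" "card K < 3 * p" "odd p"
  shows "(\<Sum>S | S \<subseteq> K \<and> zero_sum p X S \<and> p dvd card S. (-1::int) ^ card S)
       = 1 - int (zero_sum_count p p K X) + int (zero_sum_count p (2 * p) K X)"
proof -
  let ?Z = "\<lambda>n. zero_sum_subsets p X n K"
  have sizes: "card S \<in> {0, p, 2 * p}" if S: "S \<subseteq> K" "p dvd card S" for S
  proof -
    obtain k where k: "card S = p * k"
      using S(2) by blast
    have "p * k < p * 3"
      using card_mono[OF assms(1) S(1)] k assms(2) by linarith
    then have "k < 3"
      by simp
    then show ?thesis
      using k by (auto simp: less_Suc_eq numeral_3_eq_3)
  qed
  have "{S. S \<subseteq> K \<and> zero_sum p X S \<and> p dvd card S} = ?Z 0 \<union> ?Z p \<union> ?Z (2 * p)"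
    using sizes by (auto simp: zero_sum_subsets_def)
  moreover have "?Z 0 = {{}}"
    using assms(1) by (auto simp: zero_sum_subsets_def zero_sum_def card_eq_0_iff dest: finite_subset)
  moreover have "(\<Sum>S\<in>?Z n. (-1::int) ^ card S) = (-1) ^ n * int (card (?Z n))" for n
    by (simp add: zero_sum_subsets_def)
  moreover have "?Z 0 \<inter> ?Z p = {}" "(?Z 0 \<union> ?Z p) \<inter> ?Z (2 * p) = {}"
    using assms(3) by (auto simp: zero_sum_subsets_def)
  ultimately show ?thesis
    using assms(3) finite_zero_sum_subsets[OF assms(1)]
    by (simp add: sum.union_disjoint zero_sum_count_eq_card del: Un_insert_left)
qed

lemma chevalley_warning_zero_sum_count:
  assumes "prime p" "odd p" "finite K" "3 * (p - 1) < card K" "card K < 3 * p"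
  shows "[1 - int (zero_sum_count p p K X) + int (zero_sum_count p (2 * p) K X) = 0] (mod int p)"
proof -
  let ?a = "\<lambda>S. \<Sum>i\<in>S. fst (X i)" and ?b = "\<lambda>S. \<Sum>i\<in>S. snd (X i)"
    and ?c = "\<lambda>S. \<Sum>i\<in>S. 1 :: int"
  let ?ind = "\<lambda>x. of_bool (int p dvd x) :: int"
  have "(\<Sum>S\<in>Pow K. (-1) ^ card S * (?ind (?a S) * ?ind (?b S) * ?ind (?c S)))
      = (\<Sum>S\<in>Pow K. if zero_sum p X S \<and> p dvd card S then (-1) ^ card S else 0)"
    by (intro sum.cong) (auto simp: zero_sum_def)
  also have "\<dots> = (\<Sum>S | S \<subseteq> K \<and> zero_sum p X S \<and> p dvd card S. (-1) ^ card S)"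
    using assms(3) by (simp add: sum.inter_filter[symmetric] Pow_def conj_assoc)
  also have "\<dots> = 1 - int (zero_sum_count p p K X) + int (zero_sum_count p (2 * p) K X)"
    using assms(3,5,2) by (rule sum_alternating_zero_sum_subsets_card_dvd)
  finally have indicator_sum: "(\<Sum>S\<in>Pow K. (-1) ^ card S * (?ind (?a S) * ?ind (?b S) * ?ind (?c S)))
      = 1 - int (zero_sum_count p p K X) + int (zero_sum_count p (2 * p) K X)" .
  have "[(\<Sum>S\<in>Pow K. (-1) ^ card S * ((1 - ?a S ^ (p - 1)) * (1 - ?b S ^ (p - 1)) * (1 - ?c S ^ (p - 1))))
      = (\<Sum>S\<in>Pow K. (-1) ^ card S * (?ind (?a S) * ?ind (?b S) * ?ind (?c S)))] (mod int p)"
    by (intro cong_sum cong_mult cong_refl one_minus_pow_prime_minus_one_cong[OF assms(1)])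
  moreover have "(\<Sum>S\<in>Pow K. (-1) ^ card S * ((1 - ?a S ^ (p - 1)) * (1 - ?b S ^ (p - 1)) * (1 - ?c S ^ (p - 1)))) = 0"
    by (rule sum_Pow_alternating_chevalley_eq_0[OF assms(3,4)])
  ultimately show ?thesis
    unfolding indicator_sum by (simp add: cong_sym)
qed

lemma card_zero_sum_subsets_complement:
  assumes "finite T" "zero_sum p X T" "n \<le> card T"
  shows "card (zero_sum_subsets p X n T) = card (zero_sum_subsets p X (card T - n) T)"
proof (rule bij_betw_same_card[of "\<lambda>A. T - A"], rule bij_betw_byWitness[where f' = "\<lambda>A. T - A"])
  show "(\<lambda>A. T - A) ` zero_sum_subsets p X n T \<subseteq> zero_sum_subsets p X (card T - n) T"
    using assms by (auto simp: zero_sum_subsets_def card_Diff_subset finite_subset zero_sum_Diff)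
  show "(\<lambda>A. T - A) ` zero_sum_subsets p X (card T - n) T \<subseteq> zero_sum_subsets p X n T"
    using assms by (auto simp: zero_sum_subsets_def card_Diff_subset finite_subset zero_sum_Diff)
qed (auto simp: zero_sum_subsets_def)

lemma card_zero_sum_supersets:
  assumes "finite I" "A \<subseteq> I" "zero_sum p X A" "card A \<le> m"
  shows "card {T \<in> zero_sum_subsets p X m I. A \<subseteq> T} = card (zero_sum_subsets p X (m - card A) (I - A))"
proof (rule bij_betw_same_card[of "\<lambda>T. T - A"], rule bij_betw_byWitness[where f' = "\<lambda>B. B \<union> A"])
  have A: "finite A"
    using assms finite_subset by blast
  show "(\<lambda>T. T - A) ` {T \<in> zero_sum_subsets p X m I. A \<subseteq> T} \<subseteq> zero_sum_subsets p X (m - card A) (I - A)"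
    using assms A by (auto simp: zero_sum_subsets_def card_Diff_subset finite_subset zero_sum_Diff)
  show "(\<lambda>B. B \<union> A) ` zero_sum_subsets p X (m - card A) (I - A) \<subseteq> {T \<in> zero_sum_subsets p X m I. A \<subseteq> T}"
  proof (rule image_subsetI)
    fix B assume "B \<in> zero_sum_subsets p X (m - card A) (I - A)"
    then have B: "B \<subseteq> I - A" "card B = m - card A" "zero_sum p X B"
      by (simp_all add: zero_sum_subsets_def)
    have "finite B"
      using assms(1) B(1) finite_subset by blast
    moreover have "B \<inter> A = {}"
      using B(1) by blast
    ultimately show "B \<union> A \<in> {T \<in> zero_sum_subsets p X m I. A \<subseteq> T}"
      using assms A B by (auto simp: zero_sum_subsets_def card_Un_disjoint zero_sum_Un)
  qed
qed (auto simp: zero_sum_subsets_def)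

lemma sum_card_related_swap:
  assumes "finite \<A>" "finite \<T>"
  shows "(\<Sum>T\<in>\<T>. card {A \<in> \<A>. R A T}) = (\<Sum>A\<in>\<A>. card {T \<in> \<T>. R A T})"
proof -
  have "(\<Sum>T\<in>\<T>. card {A \<in> \<A>. R A T}) = (\<Sum>T\<in>\<T>. \<Sum>A\<in>\<A>. if R A T then 1 else 0)"
    using assms(1) by (simp add: sum.inter_filter[symmetric])
  also have "\<dots> = (\<Sum>A\<in>\<A>. \<Sum>T\<in>\<T>. if R A T then 1 else 0)"
    by (rule sum.swap)
  also have "\<dots> = (\<Sum>A\<in>\<A>. card {T \<in> \<T>. R A T})"
    using assms(2) by (simp add: sum.inter_filter[symmetric])
  finally show ?thesis .
qed

lemma card_zero_sum_subsets_2p_cong: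
  assumes "prime p" "odd p" "finite I" "zero_sum_count p p I X = 0"
    and "T \<subseteq> I" "3 * (p - 1) < card T" "card T < 3 * p"
  shows "[int (card (zero_sum_subsets p X (2 * p) T)) = -1] (mod int p)"
proof -
  have T: "finite T"
    using assms(3,5) finite_subset by blast
  have "zero_sum_count p p T X = 0"
    using card_mono[OF finite_zero_sum_subsets[OF assms(3)] zero_sum_subsets_mono[OF assms(5)], of p X p]
      assms(4) by (simp add: zero_sum_count_eq_card)
  then have "[1 + int (card (zero_sum_subsets p X (2 * p) T)) = 0] (mod int p)"
    using chevalley_warning_zero_sum_count[OF assms(1,2) T assms(6,7), of X]
    by (simp add: zero_sum_count_eq_card)
  then show ?thesis
    by (metis add.commute add.right_neutral cong_add_lcancel_0 cong_sym minus_add_cancel)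
qed

lemma card_zero_sum_subsets_below_cong:
  assumes "prime p" "odd p" "finite I" "zero_sum_count p p I X = 0"
    and "T \<in> zero_sum_subsets p X (3 * p - 1) I"
  shows "[int (card {A \<in> zero_sum_subsets p X (p - 1) I. A \<subseteq> T}) = -1] (mod int p)"
proof -
  have T: "T \<subseteq> I" "card T = 3 * p - 1" "zero_sum p X T"
    using assms(5) by (simp_all add: zero_sum_subsets_def)
  have "p > 0"
    using assms(1) prime_gt_0_nat by blast
  have "{A \<in> zero_sum_subsets p X (p - 1) I. A \<subseteq> T} = zero_sum_subsets p X (p - 1) T"
    using T(1) by (auto simp: zero_sum_subsets_def)
  also have "card \<dots> = card (zero_sum_subsets p X (2 * p) T)"
    using card_zero_sum_subsets_complement[OF finite_subset[OF T(1) assms(3)] T(3), of "p - 1"] T(2) \<open>p > 0\<close>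
    by simp
  finally show ?thesis
    using \<open>p > 0\<close> assms(1-4) T by (auto intro: card_zero_sum_subsets_2p_cong)
qed

lemma card_zero_sum_subsets_above_cong:
  assumes "prime p" "odd p" "finite I" "card I = 4 * p - 3" "zero_sum_count p p I X = 0"
    and "A \<in> zero_sum_subsets p X (p - 1) I"
  shows "[int (card {T \<in> zero_sum_subsets p X (3 * p - 1) I. A \<subseteq> T}) = -1] (mod int p)"
proof -
  have A: "A \<subseteq> I" "card A = p - 1" "zero_sum p X A"
    using assms(6) by (simp_all add: zero_sum_subsets_def)
  have "p > 0"
    using assms(1) prime_gt_0_nat by blast
  then have "card {T \<in> zero_sum_subsets p X (3 * p - 1) I. A \<subseteq> T} = card (zero_sum_subsets p X (2 * p) (I - A))"
    using card_zero_sum_supersets[OF assms(3) A(1,3), of "3 * p - 1"] A(2) by simp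
  moreover have "card (I - A) = 3 * p - 2"
    using \<open>p > 0\<close> assms(3,4) A by (simp add: card_Diff_subset finite_subset)
  ultimately show ?thesis
    using \<open>p > 0\<close> assms(1-3,5) card_zero_sum_subsets_2p_cong[of p I X "I - A"] by auto
qed

theorem mainTheorem6:
  fixes p :: nat and I :: "'i set" and X :: "'i \<Rightarrow> int \<times> int"
  assumes "prime p" and "odd p"
    and "finite I" and "card I = 4 * p - 3"
    and "zero_sum_count p p I X = 0"
  shows "[zero_sum_count p (p - 1) I X = zero_sum_count p (3 * p - 1) I X] (mod p)"
proof -
  define \<A> where "\<A> = zero_sum_subsets p X (p - 1) I"
  define \<T> where "\<T> = zero_sum_subsets p X (3 * p - 1) I"
  have finite: "finite \<A>" "finite \<T>"
    unfolding \<A>_def \<T>_def using finite_zero_sum_subsets[OF assms(3)] by auto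
  have "[int (\<Sum>T\<in>\<T>. card {A \<in> \<A>. A \<subseteq> T}) = (\<Sum>T\<in>\<T>. -1)] (mod int p)"
    unfolding of_nat_sum \<A>_def \<T>_def
    by (intro cong_sum card_zero_sum_subsets_below_cong[OF assms(1-3,5)])
  moreover have "[int (\<Sum>A\<in>\<A>. card {T \<in> \<T>. A \<subseteq> T}) = (\<Sum>A\<in>\<A>. -1)] (mod int p)"
    unfolding of_nat_sum \<A>_def \<T>_def
    by (intro cong_sum card_zero_sum_subsets_above_cong[OF assms])
  ultimately have "[(\<Sum>A\<in>\<A>. -1) = (\<Sum>T\<in>\<T>. -1::int)] (mod int p)"
    unfolding sum_card_related_swap[OF finite] using cong_sym cong_trans by blast
  then have "[int (card \<A>) = int (card \<T>)] (mod int p)"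
    by (simp add: cong_minus_minus_iff)
  then show ?thesis
    unfolding zero_sum_count_eq_card \<A>_def[symmetric] \<T>_def[symmetric]
    by (simp add: cong_int_iff)
qed

end
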